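(* Let $(U,\mathrm{dist})$ be a metric space, $\gamma>0$, $\eta>0$, $\Lambda\in\mathbb{R}_{>0}\cup\{\infty\}$, $p>1$, $\theta\ge1$, $m\ge1$. Let $f:U\to\mathbb{R}^m$, where $\mathbb{R}^m$ is equipped with the $\ell_1$ metric, and let $B(\cdot)$ be a $g_E$-smooth upper bound on $\mathrm{L}_{f,\Lambda}$, where $g_E(x,x')=e^{\gamma\,\mathrm{dist}(x,x')}$. Then the mechanism $M$ which on input $x$ releases $M(x)=f(x)+\frac{B(x)}{\eta}Z$, where $Z=(Z_1,\dots,Z_m)$ with $Z_j$ i.i.d. $\mathrm{GenCauchy}(0,1,p,\theta)$, is $(\varepsilon,0,\Lambda)$-GP, where $\varepsilon=\max(m\gamma,m(p\theta-1)\gamma)+(p-1)^{\frac{p-1}{p}}\theta\eta$.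
   Context: $\mathrm{L}_{f,\Lambda}(x)$ is the infimum of all $K$ such that $\|f(x)-f(x')\|_1\le K\,\mathrm{dist}(x,x')$ for all $x'\in U$ with $\mathrm{dist}(x,x')\le\Lambda$. A $g$-smooth upper bound on $\mathrm{L}_{f,\Lambda}$ is $B:U\to\mathbb{R}_{\ge0}$ with (1) $B(x)\ge\mathrm{L}_{f,\Lambda}(x)$ for all $x$ and (2) $B(x)\le g(x,x')B(x')$ for all $x,x'\in U$. $\mathrm{GenCauchy}(0,1,p,\theta)$ is the distribution on $\mathbb{R}$ with density $c_{p,\theta}(1+|y|^p)^{-\theta}$, $c_{p,\theta}=\frac{p\Gamma(\theta)}{2\Gamma(1/p)\Gamma(\theta-1/p)}$. A mechanism $M$ with outputs in $\mathbb{R}^m$ is $(\varepsilon,\delta,\Lambda)$-GP if for every measurable $S\subseteq\mathbb{R}^m$ and all $x,x'$ with $\mathrm{dist}(x,x')\le\Lambda$: $\Pr[M(x)\in S]\le e^{\varepsilon\,\mathrm{dist}(x,x')}\Pr[M(x')\in S]+\delta$. *)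

theory Defs
  imports "HOL-Probability.Probability"
begin

text \<open>The l1 norm on R^m (vectors indexed by a finite type, m = CARD('n)).\<close>
definition l1_norm :: "real ^ 'n \<Rightarrow> real" where
  "l1_norm v = (\<Sum>i\<in>UNIV. \<bar>v $ i\<bar>)"

definition local_lip :: "('a::metric_space \<Rightarrow> real ^ 'n) \<Rightarrow> ereal \<Rightarrow> 'a \<Rightarrow> ereal" where
  "local_lip f \<Lambda> x = Inf {ereal K | K. \<forall>x'. ereal (dist x x') \<le> \<Lambda> \<longrightarrow>
        l1_norm (f x - f x') \<le> K * dist x x'}"

definition smooth_upper_bound ::
  "('a \<Rightarrow> 'a \<Rightarrow> real) \<Rightarrow> ('a::metric_space \<Rightarrow> real ^ 'n) \<Rightarrow> ereal \<Rightarrow> ('a \<Rightarrow> real) \<Rightarrow> bool" where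
  "smooth_upper_bound g f \<Lambda> B \<longleftrightarrow>
     (\<forall>x. 0 \<le> B x) \<and>
     (\<forall>x. local_lip f \<Lambda> x \<le> ereal (B x)) \<and>
     (\<forall>x x'. B x \<le> g x x' * B x')"

definition gc_const :: "real \<Rightarrow> real \<Rightarrow> real" where
  "gc_const p \<theta> = p * Gamma \<theta> / (2 * Gamma (1 / p) * Gamma (\<theta> - 1 / p))"

definition gc_density :: "real \<Rightarrow> real \<Rightarrow> real \<Rightarrow> real" where
  "gc_density p \<theta> y = gc_const p \<theta> * (1 + \<bar>y\<bar> powr p) powr (- \<theta>)"

definition gc_vector :: "real \<Rightarrow> real \<Rightarrow> (real ^ 'n) measure" where
  "gc_vector p \<theta> = density lborel (\<lambda>z. ennreal (\<Prod>j\<in>UNIV. gc_density p \<theta> (z $ j)))"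

definition gc_mechanism ::
  "('a \<Rightarrow> real ^ 'n) \<Rightarrow> ('a \<Rightarrow> real) \<Rightarrow> real \<Rightarrow> real \<Rightarrow> real \<Rightarrow> 'a \<Rightarrow> (real ^ 'n) measure" where
  "gc_mechanism f B \<eta> p \<theta> x =
     distr (gc_vector p \<theta>) borel (\<lambda>z. f x + (B x / \<eta>) *\<^sub>R z)"

definition GP :: "real \<Rightarrow> real \<Rightarrow> ereal \<Rightarrow> ('a::metric_space \<Rightarrow> (real ^ 'n) measure) \<Rightarrow> bool" where
  "GP \<epsilon> \<delta> \<Lambda> M \<longleftrightarrow>
     (\<forall>S \<in> sets (borel :: (real ^ 'n) measure). \<forall>x x'. ereal (dist x x') \<le> \<Lambda> \<longrightarrow>
        measure (M x) S \<le> exp (\<epsilon> * dist x x') * measure (M x') S + \<delta>)"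

end

theory Submission
  imports Defs
begin

(* If B vanishes at one point it vanishes everywhere, so f is then constant on Lambda-neighbourhoods
  and M(x) = M(x').  Otherwise M(x) has the density
    y |-> prod_j phi((y_j - f(x)_j) / s) / s,   s = B(x) / eta,
  where phi is the GenCauchy density, and the densities of M(x) and M(x') are compared pointwise.
  By Young's inequality, ln (1 + |y|^p) is L-Lipschitz with L = (p - 1)^((p - 1)/p), so moving the
  location by f(x) - f(x'), whose l1 norm is at most B(x) dist(x, x') = s eta dist(x, x'), costs a
  factor exp (theta L eta dist(x, x')).  Smoothness of B bounds |ln s - ln s'| by gamma dist(x, x'),
  and changing the scale from s' to s costs a factor exp (max 1 (p theta - 1) gamma dist(x, x')) in
  each of the m coordinates. *)

lemma mult_powr_diff_one_le_one_plus_powr: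
  fixes p r :: real
  assumes p: "p > 1" and r: "r \<ge> 0"
  shows "p * r powr (p - 1) \<le> (p - 1) powr ((p - 1) / p) * (1 + r powr p)"
proof (cases "r = 0")
  case False
  define L where "L = (p - 1) powr ((p - 1) / p)"
  have L: "L > 0" using p by (simp add: L_def)
  have "(L / (p - 1) * r powr p) powr ((p - 1) / p) * L powr (1 / p)
      \<le> (p - 1) / p * (L / (p - 1) * r powr p) + 1 / p * L"
    using p r False L by (intro Youngs_inequality_0) (auto simp: diff_divide_distrib)
  also have "(L / (p - 1) * r powr p) powr ((p - 1) / p) * L powr (1 / p)
      = L powr ((p - 1) / p + 1 / p) / (p - 1) powr ((p - 1) / p) * r powr (p - 1)"
    using p r L by (simp add: powr_mult powr_divide powr_powr powr_add)
  also have "\<dots> = r powr (p - 1)"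
    using p by (simp add: L_def add_divide_distrib[symmetric])
  also have "(p - 1) / p * (L / (p - 1) * r powr p) + 1 / p * L = L * (1 + r powr p) / p"
    using p by (simp add: field_simps)
  finally show ?thesis
    using p by (simp add: L_def pos_le_divide_eq mult.commute)
qed simp

lemma one_plus_powr_add_le:
  fixes p r t :: real
  assumes p: "p > 1" and r: "r \<ge> 0" and t: "t \<ge> 0"
  shows "1 + (r + t) powr p \<le> exp ((p - 1) powr ((p - 1) / p) * t) * (1 + r powr p)"
proof -
  define L where "L = (p - 1) powr ((p - 1) / p)"
  define \<psi> where "\<psi> x = ln (1 + x powr p) - L * x" for x :: real
  have pos: "0 < 1 + x powr p" for x :: real
    by (simp add: add_pos_nonneg)
  have "continuous_on {r..r + t} (\<lambda>x. 1 + x powr p)"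
    using r p by (intro continuous_intros continuous_on_powr') auto
  then have "continuous_on {r..r + t} (\<lambda>x. ln (1 + x powr p))"
    by (rule continuous_on_ln) (metis pos less_irrefl)
  then have "continuous_on {r..r + t} \<psi>"
    unfolding \<psi>_def by (intro continuous_on_diff continuous_on_mult_left continuous_on_id)
  moreover have "(\<psi> has_real_derivative p * x powr (p - 1) / (1 + x powr p) - L) (at x)"
    if "r < x" for x
    unfolding \<psi>_def using that r pos[of x]
    by (auto intro!: derivative_eq_intros has_real_derivative_powr simp: field_simps)
  moreover have "p * x powr (p - 1) / (1 + x powr p) - L \<le> 0" if "r < x" for x
    using mult_powr_diff_one_le_one_plus_powr[OF p, of x] that r pos[of x]
    by (simp add: L_def divide_le_eq)
  ultimately have "\<psi> (r + t) \<le> \<psi> r"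
    using t by (intro DERIV_nonpos_imp_decreasing_open[of r "r + t" \<psi>]) (auto, force)
  then have "ln (1 + (r + t) powr p) \<le> L * t + ln (1 + r powr p)"
    by (simp add: \<psi>_def algebra_simps)
  also have "\<dots> = ln (exp (L * t) * (1 + r powr p))"
    using pos[of r] by (simp add: ln_mult)
  finally show ?thesis
    using pos by (simp add: L_def)
qed

lemma distr_affine_density_lborel:
  fixes a :: "'a::euclidean_space" and g :: "'a \<Rightarrow> ennreal"
  assumes [measurable]: "g \<in> borel_measurable borel" and s: "s > 0"
  shows "distr (density lborel g) borel (\<lambda>z. a + s *\<^sub>R z)
    = density lborel (\<lambda>y. ennreal ((1 / s) ^ DIM('a)) * g ((1 / s) *\<^sub>R (y - a)))"
proof -
  define R where "R y = (- (1 / s)) *\<^sub>R a + (1 / s) *\<^sub>R y" for y :: 'a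
  have [measurable]: "R \<in> borel_measurable borel"
    unfolding R_def by measurable
  have "density (distr lborel borel R) (\<lambda>_. ennreal ((1 / s) ^ DIM('a))) = lborel"
    unfolding R_def using lborel_affine[of "1 / s" "- (1 / s) *\<^sub>R a"] s by simp
  then have "density lborel g
      = density (density (distr lborel borel R) (\<lambda>_. ennreal ((1 / s) ^ DIM('a)))) g"
    by simp
  also have "\<dots> = density (distr lborel borel R) (\<lambda>z. ennreal ((1 / s) ^ DIM('a)) * g z)"
    by (rule density_density_eq) auto
  finally have "distr (density lborel g) lborel (\<lambda>z. a + s *\<^sub>R z)
      = density lborel ((\<lambda>z. ennreal ((1 / s) ^ DIM('a)) * g z) \<circ> R)"
    using s by (auto intro!: distr_density_distr simp: R_def scaleR_right_diff_distrib)
  moreover have "distr (density lborel g) borel (\<lambda>z. a + s *\<^sub>R z)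
      = distr (density lborel g) lborel (\<lambda>z. a + s *\<^sub>R z)"
    by (rule distr_cong) auto
  ultimately show ?thesis
    by (simp add: R_def o_def algebra_simps)
qed

lemma emeasure_density_le_cmult:
  assumes [measurable]: "f \<in> borel_measurable M" "g \<in> borel_measurable M" "S \<in> sets M"
    and fg: "\<And>y. f y \<le> c * g y"
  shows "emeasure (density M f) S \<le> c * emeasure (density M g) S"
proof -
  have "emeasure (density M f) S = (\<integral>\<^sup>+ y. f y * indicator S y \<partial>M)"
    by (simp add: emeasure_density)
  also have "\<dots> \<le> (\<integral>\<^sup>+ y. c * (g y * indicator S y) \<partial>M)"
    using fg by (intro nn_integral_mono) (simp add: mult.assoc[symmetric] mult_right_mono)
  also have "\<dots> = c * emeasure (density M g) S"
    by (simp add: nn_integral_cmult emeasure_density)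
  finally show ?thesis .
qed

lemma gc_const_pos:
  assumes "p > 0" and "\<theta> > 1 / p"
  shows "gc_const p \<theta> > 0"
proof -
  have "1 / p > 0" using assms(1) by simp
  moreover have "\<theta> > 0" using assms(2) calculation by linarith
  ultimately show ?thesis
    using assms unfolding gc_const_def by (intro divide_pos_pos mult_pos_pos Gamma_real_pos) auto
qed

lemma gc_density_pos:
  assumes "p > 0" and "\<theta> > 1 / p"
  shows "gc_density p \<theta> y > 0"
proof -
  have "1 + \<bar>y\<bar> powr p > 0" by (simp add: add_pos_nonneg)
  then show ?thesis
    using gc_const_pos[OF assms] by (simp add: gc_density_def)
qed

lemma gc_density_borel_measurable [measurable]: "gc_density p \<theta> \<in> borel_measurable borel"
  unfolding gc_density_def by measurable

lemma gc_density_le_of_abs_le: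
  assumes p: "p > 0" and \<theta>: "\<theta> > 1 / p" and yz: "\<bar>y\<bar> \<le> \<bar>z\<bar>"
  shows "gc_density p \<theta> z \<le> gc_density p \<theta> y"
proof -
  have "\<bar>y\<bar> powr p \<le> \<bar>z\<bar> powr p"
    using p yz by (intro powr_mono2) auto
  moreover have "\<theta> > 0" using p \<theta> by (smt (verit) divide_pos_pos)
  ultimately have "(1 + \<bar>z\<bar> powr p) powr (- \<theta>) \<le> (1 + \<bar>y\<bar> powr p) powr (- \<theta>)"
    by (intro powr_mono2') (auto simp: add_pos_nonneg)
  then show ?thesis
    using gc_const_pos[OF p \<theta>] by (simp add: gc_density_def)
qed

lemma gc_density_le_scaled:
  assumes p: "p > 0" and \<theta>: "\<theta> > 1 / p" and q: "q \<ge> 1"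
  shows "gc_density p \<theta> y \<le> q powr (p * \<theta>) * gc_density p \<theta> (q * y)"
proof -
  have "1 + \<bar>q * y\<bar> powr p \<le> q powr p * (1 + \<bar>y\<bar> powr p)"
    using p q by (simp add: abs_mult powr_mult distrib_left ge_one_powr_ge_zero)
  moreover have "\<theta> > 0" using p \<theta> by (smt (verit) divide_pos_pos)
  ultimately have "(q powr p * (1 + \<bar>y\<bar> powr p)) powr (- \<theta>)
      \<le> (1 + \<bar>q * y\<bar> powr p) powr (- \<theta>)"
    by (intro powr_mono2') (auto simp: add_pos_nonneg)
  moreover have "(1 + \<bar>y\<bar> powr p) powr (- \<theta>)
      = q powr (p * \<theta>) * (q powr p * (1 + \<bar>y\<bar> powr p)) powr (- \<theta>)"
    using q by (simp add: powr_mult powr_powr powr_add[symmetric] add_pos_nonneg)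
  ultimately have "(1 + \<bar>y\<bar> powr p) powr (- \<theta>)
      \<le> q powr (p * \<theta>) * (1 + \<bar>q * y\<bar> powr p) powr (- \<theta>)"
    using q by (simp add: mult_left_mono)
  then show ?thesis
    using gc_const_pos[OF p \<theta>] by (simp add: gc_density_def)
qed

lemma gc_density_add_le:
  assumes p: "p > 1" and \<theta>: "\<theta> > 1 / p"
  shows "gc_density p \<theta> (v + w)
    \<le> exp (\<theta> * (p - 1) powr ((p - 1) / p) * \<bar>w\<bar>) * gc_density p \<theta> v"
proof -
  define e where "e = exp ((p - 1) powr ((p - 1) / p) * \<bar>w\<bar>)"
  have "\<bar>v\<bar> powr p \<le> (\<bar>v + w\<bar> + \<bar>w\<bar>) powr p"
    using p by (intro powr_mono2) auto
  also have "1 + (\<bar>v + w\<bar> + \<bar>w\<bar>) powr p \<le> e * (1 + \<bar>v + w\<bar> powr p)"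
    unfolding e_def using p by (intro one_plus_powr_add_le) auto
  moreover have "\<theta> > 0" using p \<theta> by (smt (verit) divide_pos_pos)
  ultimately have "(e * (1 + \<bar>v + w\<bar> powr p)) powr (- \<theta>)
      \<le> (1 + \<bar>v\<bar> powr p) powr (- \<theta>)"
    by (intro powr_mono2') (auto simp: add_pos_nonneg)
  moreover have "(1 + \<bar>v + w\<bar> powr p) powr (- \<theta>)
      = e powr \<theta> * (e * (1 + \<bar>v + w\<bar> powr p)) powr (- \<theta>)"
    by (simp add: e_def powr_mult powr_add[symmetric] add_pos_nonneg)
  moreover have "e powr \<theta> = exp (\<theta> * (p - 1) powr ((p - 1) / p) * \<bar>w\<bar>)"
    by (simp add: e_def exp_powr_real mult_ac)
  ultimately have "(1 + \<bar>v + w\<bar> powr p) powr (- \<theta>)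
      \<le> exp (\<theta> * (p - 1) powr ((p - 1) / p) * \<bar>w\<bar>) * (1 + \<bar>v\<bar> powr p) powr (- \<theta>)"
    by (simp add: mult_left_mono)
  then show ?thesis
    using gc_const_pos[of p \<theta>] p \<theta> by (simp add: gc_density_def)
qed

lemma gc_density_rescale_le:
  assumes p: "p > 0" and \<theta>: "\<theta> > 1 / p" and s: "s > 0" and s': "s' > 0"
    and ss': "s \<le> exp \<kappa> * s'" and s's: "s' \<le> exp \<kappa> * s"
  shows "gc_density p \<theta> (u / s) / s
    \<le> exp (max \<kappa> ((p * \<theta> - 1) * \<kappa>)) * (gc_density p \<theta> (u / s') / s')"
proof -
  have nonneg: "0 \<le> gc_density p \<theta> y / s'" for y
    using gc_density_pos[OF p \<theta>, of y] s' by simp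
  show ?thesis
  proof (cases "s \<le> s'")
    case True
    have "gc_density p \<theta> (u / s) / s \<le> gc_density p \<theta> (u / s') / s"
      using True s s' by (intro divide_right_mono gc_density_le_of_abs_le[OF p \<theta>])
        (auto simp: abs_divide frac_le)
    also have "\<dots> = (1 / s) * gc_density p \<theta> (u / s')"
      by simp
    also have "\<dots> \<le> (exp \<kappa> / s') * gc_density p \<theta> (u / s')"
      using s s' s's gc_density_pos[OF p \<theta>, THEN less_imp_le]
      by (intro mult_right_mono) (auto simp: field_simps)
    also have "\<dots> = exp \<kappa> * (gc_density p \<theta> (u / s') / s')"
      by simp
    also have "\<dots> \<le> exp (max \<kappa> ((p * \<theta> - 1) * \<kappa>)) * (gc_density p \<theta> (u / s') / s')"
      using nonneg by (intro mult_right_mono) auto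
    finally show ?thesis .
  next
    case False
    define q where "q = s / s'"
    have q: "q \<ge> 1" and q_le: "q \<le> exp \<kappa>"
      using False s s' ss' by (auto simp: q_def field_simps)
    have "p * \<theta> - 1 \<ge> 0" using p \<theta> by (simp add: field_simps)
    have "gc_density p \<theta> (u / s) / s \<le> q powr (p * \<theta>) * gc_density p \<theta> (q * (u / s)) / s"
      using s by (intro divide_right_mono gc_density_le_scaled[OF p \<theta> q]) auto
    also have "\<dots> = q powr (p * \<theta> - 1) * (gc_density p \<theta> (u / s') / s')"
      using s s' by (simp add: q_def powr_diff field_simps)
    also have "\<dots> \<le> exp \<kappa> powr (p * \<theta> - 1) * (gc_density p \<theta> (u / s') / s')"
      using q q_le \<open>p * \<theta> - 1 \<ge> 0\<close> nonneg by (intro mult_right_mono powr_mono2) auto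
    also have "\<dots> \<le> exp (max \<kappa> ((p * \<theta> - 1) * \<kappa>)) * (gc_density p \<theta> (u / s') / s')"
      using nonneg by (intro mult_right_mono) (auto simp: exp_powr_real mult.commute)
    finally show ?thesis .
  qed
qed

definition gc_affine_density :: "real \<Rightarrow> real \<Rightarrow> real ^ 'n \<Rightarrow> real \<Rightarrow> real ^ 'n \<Rightarrow> real" where
  "gc_affine_density p \<theta> a s y = (\<Prod>j\<in>UNIV. gc_density p \<theta> ((y $ j - a $ j) / s) / s)"

lemma gc_affine_density_borel_measurable [measurable]:
  "gc_affine_density p \<theta> a s \<in> borel_measurable borel"
  unfolding gc_affine_density_def by measurable

lemma gc_affine_density_nonneg:
  assumes "p > 0" and "\<theta> > 1 / p" and "s > 0"
  shows "gc_affine_density p \<theta> a s y \<ge> 0"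
  unfolding gc_affine_density_def
  using gc_density_pos[OF assms(1,2)] assms(3) by (intro prod_nonneg) (simp add: less_imp_le)

lemma gc_affine_density_le:
  fixes a a' y :: "real ^ 'n" and p \<theta> s s' \<kappa> \<delta> :: real
  assumes p: "p > 1" and \<theta>: "\<theta> > 1 / p" and s: "s > 0" and s': "s' > 0"
    and ss': "s \<le> exp \<kappa> * s'" and s's: "s' \<le> exp \<kappa> * s"
    and shift: "l1_norm (a - a') \<le> s * \<delta>"
  shows "gc_affine_density p \<theta> a s y
    \<le> exp (\<theta> * (p - 1) powr ((p - 1) / p) * \<delta> + CARD('n) * max \<kappa> ((p * \<theta> - 1) * \<kappa>))
      * gc_affine_density p \<theta> a' s' y"
proof -
  define L where "L = (p - 1) powr ((p - 1) / p)"
  define M where "M = max \<kappa> ((p * \<theta> - 1) * \<kappa>)"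
  define h where "h j = gc_density p \<theta> ((y $ j - a' $ j) / s') / s'" for j
  have p0: "p > 0" using p by simp
  have coord: "gc_density p \<theta> ((y $ j - a $ j) / s) / s
      \<le> exp (\<theta> * L * \<bar>a $ j - a' $ j\<bar> / s) * (exp M * h j)" for j
  proof -
    have "(y $ j - a $ j) / s = (y $ j - a' $ j) / s + (a' $ j - a $ j) / s"
      using s by (simp add: field_simps)
    then have "gc_density p \<theta> ((y $ j - a $ j) / s)
        \<le> exp (\<theta> * L * \<bar>(a' $ j - a $ j) / s\<bar>) * gc_density p \<theta> ((y $ j - a' $ j) / s)"
      unfolding L_def using gc_density_add_le[OF p \<theta>] by metis
    also have "\<theta> * L * \<bar>(a' $ j - a $ j) / s\<bar> = \<theta> * L * \<bar>a $ j - a' $ j\<bar> / s"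
      using s by (simp add: abs_minus_commute)
    finally have "gc_density p \<theta> ((y $ j - a $ j) / s) / s
        \<le> exp (\<theta> * L * \<bar>a $ j - a' $ j\<bar> / s) * (gc_density p \<theta> ((y $ j - a' $ j) / s) / s)"
      using s by (simp add: divide_right_mono)
    also have "\<dots> \<le> exp (\<theta> * L * \<bar>a $ j - a' $ j\<bar> / s) * (exp M * h j)"
      unfolding M_def h_def
      by (intro mult_left_mono gc_density_rescale_le[OF p0 \<theta> s s' ss' s's]) auto
    finally show ?thesis .
  qed
  have "gc_affine_density p \<theta> a s y
      \<le> (\<Prod>j\<in>UNIV. exp (\<theta> * L * \<bar>a $ j - a' $ j\<bar> / s) * (exp M * h j))"
    unfolding gc_affine_density_def
    using coord gc_density_pos[OF p0 \<theta>] s by (intro prod_mono) (simp add: less_imp_le)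
  also have "\<dots>
      = exp (\<Sum>j\<in>UNIV. \<theta> * L * \<bar>a $ j - a' $ j\<bar> / s) * exp M ^ CARD('n) * prod h UNIV"
    by (simp add: prod.distrib exp_sum)
  also have "\<dots>
      = exp (\<theta> * L * l1_norm (a - a') / s + CARD('n) * M) * gc_affine_density p \<theta> a' s' y"
    by (simp add: l1_norm_def sum_divide_distrib[symmetric] sum_distrib_left[symmetric] exp_add
        exp_of_nat_mult h_def gc_affine_density_def mult.assoc)
  also have "\<dots> \<le> exp (\<theta> * L * \<delta> + CARD('n) * M) * gc_affine_density p \<theta> a' s' y"
  proof -
    have "\<theta> > 0" using p0 \<theta> by (smt (verit) divide_pos_pos)
    moreover have "l1_norm (a - a') / s \<le> \<delta>"
      using shift s by (simp add: pos_divide_le_eq mult.commute)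
    ultimately have "\<theta> * L * (l1_norm (a - a') / s) \<le> \<theta> * L * \<delta>"
      by (intro mult_left_mono) (auto simp: L_def)
    then show ?thesis
      using gc_affine_density_nonneg[OF p0 \<theta> s'] by (intro mult_right_mono) auto
  qed
  finally show ?thesis
    by (simp add: L_def M_def)
qed

lemma distr_gc_vector_affine:
  fixes a :: "real ^ 'n"
  assumes p: "p > 0" and \<theta>: "\<theta> > 1 / p" and s: "s > 0"
  shows "distr (gc_vector p \<theta>) borel (\<lambda>z. a + s *\<^sub>R z)
    = density lborel (\<lambda>y. ennreal (gc_affine_density p \<theta> a s y))"
proof -
  have "distr (gc_vector p \<theta>) borel (\<lambda>z. a + s *\<^sub>R z)
      = density lborel (\<lambda>y. ennreal ((1 / s) ^ CARD('n))
          * ennreal (\<Prod>j\<in>UNIV. gc_density p \<theta> (((1 / s) *\<^sub>R (y - a)) $ j)))"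
    unfolding gc_vector_def using s by (subst distr_affine_density_lborel) (auto simp: gc_density_def)
  also have "\<dots> = density lborel (\<lambda>y. ennreal (gc_affine_density p \<theta> a s y))"
    using gc_density_pos[OF p \<theta>] s
    by (intro arg_cong[where f = "density lborel"] ext)
      (auto simp: gc_affine_density_def ennreal_mult'[symmetric] prod_nonneg less_imp_le
        prod_dividef diff_divide_distrib power_one_over)
  finally show ?thesis .
qed

lemma l1_norm_nonneg: "l1_norm v \<ge> 0"
  by (simp add: l1_norm_def sum_nonneg)

lemma l1_norm_eq_0_iff: "l1_norm v = 0 \<longleftrightarrow> v = 0"
  by (simp add: l1_norm_def sum_nonneg_eq_0_iff vec_eq_iff)

lemma l1_norm_le_of_local_lip_le:
  assumes lip: "local_lip f \<Lambda> x \<le> ereal K" and dist: "ereal (dist x x') \<le> \<Lambda>"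
  shows "l1_norm (f x - f x') \<le> K * dist x x'"
proof (cases "x = x'")
  case False
  then have d: "dist x x' > 0" by simp
  have "ereal (l1_norm (f x - f x') / dist x x') \<le> local_lip f \<Lambda> x"
    unfolding local_lip_def using dist d by (intro Inf_greatest) (auto simp: pos_divide_le_eq)
  also note lip
  finally show ?thesis
    using d by (simp add: pos_divide_le_eq)
qed (simp add: l1_norm_def)

lemma smooth_upper_bound_l1_norm_le:
  assumes "smooth_upper_bound g f \<Lambda> B" and "ereal (dist x x') \<le> \<Lambda>"
  shows "l1_norm (f x - f x') \<le> B x * dist x x'"
  using assms by (intro l1_norm_le_of_local_lip_le) (auto simp: smooth_upper_bound_def)

lemma smooth_upper_bound_exp_eq_0:
  assumes "smooth_upper_bound (\<lambda>x x'. exp (\<gamma> * dist x x')) f \<Lambda> B" and "B x = 0"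
  shows "B x' = 0"
  using assms unfolding smooth_upper_bound_def by (metis mult_zero_right order_antisym)

lemma GP_of_emeasure_le:
  fixes M :: "'a::metric_space \<Rightarrow> (real ^ 'n) measure"
  assumes le: "\<And>S x x'. S \<in> sets borel \<Longrightarrow> ereal (dist x x') \<le> \<Lambda> \<Longrightarrow>
      emeasure (M x) S \<le> ennreal (exp (\<epsilon> * dist x x')) * emeasure (M x') S"
  shows "GP \<epsilon> 0 \<Lambda> M"
  unfolding GP_def
proof (intro ballI allI impI)
  fix S :: "(real ^ 'n) set" and x x' :: 'a
  assume S: "S \<in> sets borel" and dist: "ereal (dist x x') \<le> \<Lambda>"
  let ?c = "ennreal (exp (\<epsilon> * dist x x'))"
  have le': "emeasure (M x') S \<le> ?c * emeasure (M x) S"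
    using le[OF S] dist by (metis dist_commute)
  show "measure (M x) S \<le> exp (\<epsilon> * dist x x') * measure (M x') S + 0"
  proof (cases "emeasure (M x') S = \<infinity>")
    case True
    \<comment> \<open>\<open>measure\<close> is 0 on sets of infinite measure, so here the reverse bound is needed.\<close>
    with le' have "?c * emeasure (M x) S = \<infinity>"
      by (simp add: top_unique)
    then have "emeasure (M x) S = \<infinity>"
      by (simp add: ennreal_mult_eq_top_iff)
    with True show ?thesis
      by (simp add: measure_def)
  next
    case False
    then have "?c * emeasure (M x') S < \<top>"
      by (simp add: ennreal_mult_less_top less_top)
    with le[OF S dist] have "enn2real (emeasure (M x) S) \<le> enn2real (?c * emeasure (M x') S)"
      by (rule enn2real_mono)
    then show ?thesis
      by (simp add: measure_def enn2real_mult)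
  qed
qed

lemma gc_mechanism_emeasure_le:
  fixes f :: "'a::metric_space \<Rightarrow> real ^ 'n" and \<gamma> \<eta> p \<theta> :: real
  assumes \<eta>: "\<eta> > 0" and p: "p > 1" and \<theta>: "\<theta> > 1 / p"
    and B: "smooth_upper_bound (\<lambda>x x'. exp (\<gamma> * dist x x')) f \<Lambda> B"
    and Bx: "B x > 0" and Bx': "B x' > 0" and dist: "ereal (dist x x') \<le> \<Lambda>"
    and S: "S \<in> sets borel"
  shows "emeasure (gc_mechanism f B \<eta> p \<theta> x) S
    \<le> ennreal (exp ((max (CARD('n) * \<gamma>) (CARD('n) * (p * \<theta> - 1) * \<gamma>)
                      + (p - 1) powr ((p - 1) / p) * \<theta> * \<eta>) * dist x x'))
      * emeasure (gc_mechanism f B \<eta> p \<theta> x') S"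
proof -
  define d where "d = dist x x'"
  define s where "s = B x / \<eta>"
  define s' where "s' = B x' / \<eta>"
  define L where "L = (p - 1) powr ((p - 1) / p)"
  have p0: "p > 0" and d: "d \<ge> 0" and s: "s > 0" and s': "s' > 0"
    using p Bx Bx' \<eta> by (auto simp: d_def s_def s'_def)
  have "B x \<le> exp (\<gamma> * d) * B x'" and "B x' \<le> exp (\<gamma> * d) * B x"
    using B unfolding smooth_upper_bound_def d_def by (metis dist_commute)+
  then have ss': "s \<le> exp (\<gamma> * d) * s'" and s's: "s' \<le> exp (\<gamma> * d) * s"
    using \<eta> by (simp_all add: s_def s'_def field_simps)
  have "l1_norm (f x - f x') \<le> s * (\<eta> * d)"
    using smooth_upper_bound_l1_norm_le[OF B dist] \<eta> by (simp add: s_def d_def)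
  then have dens: "gc_affine_density p \<theta> (f x) s y
      \<le> exp (\<theta> * L * (\<eta> * d) + CARD('n) * max (\<gamma> * d) ((p * \<theta> - 1) * (\<gamma> * d)))
        * gc_affine_density p \<theta> (f x') s' y" for y
    unfolding L_def by (rule gc_affine_density_le[OF p \<theta> s s' ss' s's])
  have exponent: "\<theta> * L * (\<eta> * d) + CARD('n) * max (\<gamma> * d) ((p * \<theta> - 1) * (\<gamma> * d))
      = (max (CARD('n) * \<gamma>) (CARD('n) * (p * \<theta> - 1) * \<gamma>) + L * \<theta> * \<eta>) * d"
    using d by (simp add: max_mult_distrib_left max_mult_distrib_right algebra_simps)
  show ?thesis
    unfolding gc_mechanism_def s_def[symmetric] s'_def[symmetric] d_def[symmetric] L_def[symmetric]
      distr_gc_vector_affine[OF p0 \<theta> s] distr_gc_vector_affine[OF p0 \<theta> s']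
    using S dens[unfolded exponent] gc_affine_density_nonneg[OF p0 \<theta> s']
    by (intro emeasure_density_le_cmult) (auto simp: ennreal_mult'[symmetric] intro!: ennreal_leI)
qed

lemma gc_mechanism_eq_of_smooth_upper_bound_eq_0:
  assumes B: "smooth_upper_bound (\<lambda>x x'. exp (\<gamma> * dist x x')) f \<Lambda> B"
    and Bx: "B x = 0" and dist: "ereal (dist x x') \<le> \<Lambda>"
  shows "gc_mechanism f B \<eta> p \<theta> x = gc_mechanism f B \<eta> p \<theta> x'"
proof -
  have "B x' = 0" and "f x = f x'"
    using Bx smooth_upper_bound_exp_eq_0[OF B] smooth_upper_bound_l1_norm_le[OF B dist]
      l1_norm_nonneg[of "f x - f x'"] by (auto simp: l1_norm_eq_0_iff)
  with Bx show ?thesis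
    by (simp add: gc_mechanism_def)
qed

theorem mainTheorem4:
  fixes f :: "'a::metric_space \<Rightarrow> real ^ 'n"
    and B :: "'a \<Rightarrow> real"
    and \<gamma> \<eta> p \<theta> :: real
    and \<Lambda> :: ereal
  assumes "\<gamma> > 0" and "\<eta> > 0" and "\<Lambda> > 0"
    and "p > 1" and "\<theta> \<ge> 1"
    and "smooth_upper_bound (\<lambda>x x'. exp (\<gamma> * dist x x')) f \<Lambda> B"
  shows "GP (max (real CARD('n) * \<gamma>) (real CARD('n) * (p * \<theta> - 1) * \<gamma>)
               + (p - 1) powr ((p - 1) / p) * \<theta> * \<eta>)
            0 \<Lambda> (gc_mechanism f B \<eta> p \<theta>)"
proof (rule GP_of_emeasure_le)
  note \<gamma> = assms(1) and \<eta> = assms(2) and p = assms(4) and B = assms(6)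
  have "1 / p < 1" using p by simp
  with assms(5) have \<theta>: "\<theta> > 1 / p" by linarith
  fix S :: "(real ^ 'n) set" and x x' :: 'a
  assume S: "S \<in> sets borel" and dist: "ereal (dist x x') \<le> \<Lambda>"
  let ?M = "gc_mechanism f B \<eta> p \<theta>"
  let ?c = "ennreal (exp ((max (real CARD('n) * \<gamma>) (real CARD('n) * (p * \<theta> - 1) * \<gamma>)
    + (p - 1) powr ((p - 1) / p) * \<theta> * \<eta>) * dist x x'))"
  show "emeasure (?M x) S \<le> ?c * emeasure (?M x') S"
  proof (cases "B x = 0")
    case True
    have "1 \<le> ?c"
      using \<gamma> \<eta> assms(5) by (simp add: max_def)
    then show ?thesis
      using gc_mechanism_eq_of_smooth_upper_bound_eq_0[OF B True dist, of \<eta> p \<theta>]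
        mult_right_mono[of 1 ?c] by simp
  next
    case False
    then have "B x > 0" and "B x' > 0"
      using B smooth_upper_bound_exp_eq_0[OF B, of x' x] by (auto simp: smooth_upper_bound_def less_le)
    then show ?thesis
      using gc_mechanism_emeasure_le[OF \<eta> p \<theta> B _ _ dist S] by simp
  qed
qed

end
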